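(* Let $0<\alpha<1$, $\lambda>0$, $P$ a probability distribution of $\xi$, and for every $\xi$ let $x\mapsto\ell(x;\xi)$ be $G$-Lipschitz and $L$-smooth. Let $\psi^*(t)=\frac1\alpha\log(1-\alpha+\alpha e^t)$ and define $\widehat{\mathcal L}(x,\eta,\xi)=\lambda\psi^*\big(\frac{\ell(x;\xi)-G\eta}{\lambda}\big)+G\eta$, $\widehat{\mathcal L}(x,\eta)=\mathbb E_{\xi\sim P}\widehat{\mathcal L}(x,\eta,\xi)$. Then for all $(x,\eta)$, $\mathbb E\|\nabla\widehat{\mathcal L}(x,\eta,\xi)\|^2\le2\alpha^{-2}G^2$, and $\widehat{\mathcal L}$ is $K$-smooth in $(x,\eta)$ with $K=\frac L\alpha+\frac{G^2}{2\lambda\alpha}$.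
   Context: $\psi^*$ here is the conjugate of the smoothed CVaR divergence $\psi^{\mathrm{smo}}_\alpha(t)=t\log t+\frac{1-\alpha t}{\alpha}\log\frac{1-\alpha t}{1-\alpha}$ on $[0,1/\alpha)$, $+\infty$ otherwise. Gradients are with respect to $(x,\eta)$. *)

theory Defs
  imports "HOL-Analysis.Analysis" "HOL-Probability.Probability"
begin

definition has_gradient :: "('a::real_inner \<Rightarrow> real) \<Rightarrow> 'a \<Rightarrow> 'a \<Rightarrow> bool" where
  "has_gradient f g z \<longleftrightarrow> (f has_derivative (\<lambda>h. g \<bullet> h)) (at z)"

definition gradient :: "('a::real_inner \<Rightarrow> real) \<Rightarrow> 'a \<Rightarrow> 'a" where
  "gradient f z = (THE g. has_gradient f g z)"

definition smooth_with :: "real \<Rightarrow> ('a::real_inner \<Rightarrow> real) \<Rightarrow> bool" where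
  "smooth_with L f \<longleftrightarrow> (\<forall>z. \<exists>g. has_gradient f g z) \<and> L-lipschitz_on UNIV (gradient f)"

text \<open>Conjugate of the smoothed CVaR divergence.\<close>
definition psi_star :: "real \<Rightarrow> real \<Rightarrow> real" where
  "psi_star \<alpha> t = ln (1 - \<alpha> + \<alpha> * exp t) / \<alpha>"

definition Lhat_pt :: "real \<Rightarrow> real \<Rightarrow> real \<Rightarrow> ('a \<Rightarrow> 'b \<Rightarrow> real) \<Rightarrow> 'a \<times> real \<Rightarrow> 'b \<Rightarrow> real" where
  "Lhat_pt \<alpha> lam G ell z \<xi> = lam * psi_star \<alpha> ((ell (fst z) \<xi> - G * snd z) / lam) + G * snd z"

definition Lhat :: "'b measure \<Rightarrow> real \<Rightarrow> real \<Rightarrow> real \<Rightarrow> ('a \<Rightarrow> 'b \<Rightarrow> real) \<Rightarrow> 'a \<times> real \<Rightarrow> real" where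
  "Lhat P \<alpha> lam G ell z = (\<integral>\<xi>. Lhat_pt \<alpha> lam G ell z \<xi> \<partial>P)"

end

theory Submission
  imports Defs
begin

(* Write u = (ell x xi - G eta) / lam and s = psi_star' u = e^u / (1 - alpha + alpha e^u).
   By the chain rule the gradient of Lhat_pt in (x, eta) is (s grad ell(x), G (1 - s)); since
   0 < s < 1/alpha and |grad ell| <= G, both components are at most G / alpha, which gives the
   second-moment bound. By AM-GM the derivative of psi_star' is at most 1/(4 alpha), and u is
   (sqrt 2 G / lam)-Lipschitz in (x, eta), so these pointwise gradients are K-Lipschitz uniformly
   in xi. Finally, an expectation of functions with uniformly K-Lipschitz gradients is K-smooth:
   their first-order Taylor remainders are bounded by K |h|^2 uniformly, which justifies
   differentiating under the integral. *)

lemma gradient_eqI: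
  assumes "has_gradient f g z"
  shows "gradient f z = g"
proof -
  have "g' = g" if "has_gradient f g' z" for g'
  proof -
    have "(\<lambda>h. g' \<bullet> h) = (\<lambda>h. g \<bullet> h)"
      using has_derivative_unique that assms unfolding has_gradient_def by blast
    then have "(g' - g) \<bullet> (g' - g) = 0"
      by (metis inner_diff_left right_minus_eq)
    then show ?thesis by simp
  qed
  then show ?thesis unfolding gradient_def using assms by blast
qed

lemma has_gradient_imp_DERIV_line:
  assumes "has_gradient f g (z + t *\<^sub>R h)"
  shows "((\<lambda>s. f (z + s *\<^sub>R h)) has_real_derivative g \<bullet> h) (at t)"
proof -
  have "((\<lambda>s. z + s *\<^sub>R h) has_derivative (\<lambda>s. s *\<^sub>R h)) (at t)"
    by (auto intro!: derivative_eq_intros)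
  from has_derivative_compose[OF this assms[unfolded has_gradient_def]]
  show ?thesis
    by (rule has_derivative_imp_has_field_derivative) simp
qed

lemma norm_gradient_le_lipschitz:
  assumes "has_gradient f g z" and "G-lipschitz_on UNIV f"
  shows "norm g \<le> G"
proof -
  have "DERIV (\<lambda>s. f (z + s *\<^sub>R g)) 0 :> g \<bullet> g"
    using has_gradient_imp_DERIV_line[of f g z 0] assms(1) by simp
  then have "((\<lambda>s. (f (z + s *\<^sub>R g) - f z) / s) \<longlongrightarrow> (norm g)\<^sup>2) (at 0)"
    by (simp add: DERIV_def power2_norm_eq_inner)
  moreover have "(f (z + s *\<^sub>R g) - f z) / s \<le> G * norm g" if "s \<noteq> 0" for s
  proof -
    have "\<bar>f (z + s *\<^sub>R g) - f z\<bar> \<le> G * (\<bar>s\<bar> * norm g)"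
      using lipschitz_on_normD[OF assms(2), of "z + s *\<^sub>R g" z] by simp
    then show ?thesis
      using that by (cases "0 < s") (auto simp: divide_le_eq abs_le_iff mult_ac)
  qed
  ultimately have "(norm g)\<^sup>2 \<le> G * norm g"
    by (intro tendsto_upperbound) (auto simp: eventually_at_filter)
  then show ?thesis
    using lipschitz_on_nonneg[OF assms(2)] by (cases "g = 0") (auto simp: power2_eq_square)
qed

lemma has_gradient_difference_quotient_limit:
  assumes "has_gradient f g z" and "X \<longlonglongrightarrow> 0" and "\<And>n. X n \<noteq> 0"
  shows "(\<lambda>n. (f (z + X n *\<^sub>R h) - f z) / X n) \<longlonglongrightarrow> g \<bullet> h"
proof -
  have "DERIV (\<lambda>s. f (z + s *\<^sub>R h)) 0 :> g \<bullet> h"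
    using has_gradient_imp_DERIV_line[of f g z 0] assms by simp
  then have "((\<lambda>s. (f (z + s *\<^sub>R h) - f z) / s) \<longlongrightarrow> g \<bullet> h) (at 0)"
    by (simp add: DERIV_def)
  then show ?thesis
    using assms(2,3) unfolding tendsto_at_iff_sequentially comp_def by blast
qed

lemma lipschitz_gradient_remainder_le:
  fixes f :: "'v::real_inner \<Rightarrow> real"
  assumes grad: "\<And>z. has_gradient f (g z) z" and lip: "K-lipschitz_on UNIV g"
  shows "\<bar>f (z + h) - f z - g z \<bullet> h\<bar> \<le> K * (norm h)\<^sup>2"
proof -
  define \<phi> where "\<phi> t = f (z + t *\<^sub>R h) - t * (g z \<bullet> h)" for t
  have \<phi>': "DERIV \<phi> t :> (g (z + t *\<^sub>R h) - g z) \<bullet> h" for t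
    unfolding \<phi>_def using has_gradient_imp_DERIV_line[OF grad]
    by (auto intro!: derivative_eq_intros simp: inner_diff_left)
  obtain c where c: "0 < c" "c < 1" "\<phi> 1 - \<phi> 0 = (g (z + c *\<^sub>R h) - g z) \<bullet> h"
    using MVT2[of 0 1 \<phi>, OF _ \<phi>'] by auto
  have "\<bar>(g (z + c *\<^sub>R h) - g z) \<bullet> h\<bar> \<le> norm (g (z + c *\<^sub>R h) - g z) * norm h"
    by (rule Cauchy_Schwarz_ineq2)
  also have "\<dots> \<le> K * norm (c *\<^sub>R h) * norm h"
    using lipschitz_on_normD[OF lip, of "z + c *\<^sub>R h" z] by (simp add: mult_right_mono)
  also have "\<dots> \<le> K * norm h * norm h"
    using c lipschitz_on_nonneg[OF lip]
    by (intro mult_right_mono mult_left_mono) (auto intro: mult_left_le_one_le)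
  finally show ?thesis
    using c(3) unfolding \<phi>_def by (simp add: power2_eq_square)
qed

context
  fixes P :: "'b measure" and f :: "'b \<Rightarrow> 'v::euclidean_space \<Rightarrow> real"
    and g :: "'b \<Rightarrow> 'v \<Rightarrow> 'v" and K :: real
  assumes prob: "prob_space P"
    and f_integrable: "\<And>z. integrable P (\<lambda>\<xi>. f \<xi> z)"
    and f_gradient: "\<And>\<xi> z. \<xi> \<in> space P \<Longrightarrow> has_gradient (f \<xi>) (g \<xi> z) z"
    and g_lipschitz: "\<And>\<xi>. \<xi> \<in> space P \<Longrightarrow> K-lipschitz_on UNIV (g \<xi>)"
begin

lemma integrable_inner_gradient: "integrable P (\<lambda>\<xi>. g \<xi> z \<bullet> h)"
proof (rule Bochner_Integration.integrable_bound)
  let ?q = "\<lambda>n \<xi>. (f \<xi> (z + inverse (real (Suc n)) *\<^sub>R h) - f \<xi> z) / inverse (real (Suc n))"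
  show "(\<lambda>\<xi>. g \<xi> z \<bullet> h) \<in> borel_measurable P"
  proof (rule borel_measurable_LIMSEQ_real[where u="?q"])
    show "?q n \<in> borel_measurable P" for n
      using f_integrable by measurable
    show "(\<lambda>n. ?q n \<xi>) \<longlonglongrightarrow> g \<xi> z \<bullet> h" if "\<xi> \<in> space P" for \<xi>
      by (rule has_gradient_difference_quotient_limit[OF f_gradient[OF that] LIMSEQ_inverse_real_of_nat])
        simp
  qed
  show "integrable P (\<lambda>\<xi>. \<bar>f \<xi> (z + h)\<bar> + \<bar>f \<xi> z\<bar> + K * (norm h)\<^sup>2)"
  proof -
    interpret prob_space P by (rule prob)
    show ?thesis using f_integrable by auto
  qed
  show "AE \<xi> in P. norm (g \<xi> z \<bullet> h) \<le> norm (\<bar>f \<xi> (z + h)\<bar> + \<bar>f \<xi> z\<bar> + K * (norm h)\<^sup>2)"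
  proof (rule AE_I2)
    fix \<xi> assume "\<xi> \<in> space P"
    then have "\<bar>f \<xi> (z + h) - f \<xi> z - g \<xi> z \<bullet> h\<bar> \<le> K * (norm h)\<^sup>2"
      by (intro lipschitz_gradient_remainder_le f_gradient g_lipschitz)
    then show "norm (g \<xi> z \<bullet> h) \<le> norm (\<bar>f \<xi> (z + h)\<bar> + \<bar>f \<xi> z\<bar> + K * (norm h)\<^sup>2)"
      by simp
  qed
qed

lemma integrable_gradient: "integrable P (\<lambda>\<xi>. g \<xi> z)"
proof -
  have "integrable P (\<lambda>\<xi>. \<Sum>b\<in>Basis. (g \<xi> z \<bullet> b) *\<^sub>R b)"
    using integrable_inner_gradient by auto
  then show ?thesis
    by (simp add: euclidean_representation)
qed

lemma has_gradient_integral: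
  "has_gradient (\<lambda>z. \<integral>\<xi>. f \<xi> z \<partial>P) (\<integral>\<xi>. g \<xi> z \<partial>P) z"
  unfolding has_gradient_def has_derivative_at
proof
  interpret prob_space P by (rule prob)
  let ?F = "\<lambda>z. \<integral>\<xi>. f \<xi> z \<partial>P" and ?g = "\<integral>\<xi>. g \<xi> z \<partial>P"
  show "bounded_linear ((\<bullet>) ?g)"
    by (rule bounded_linear_inner_right)
  have remainder: "\<bar>?F (z + h) - ?F z - ?g \<bullet> h\<bar> \<le> K * (norm h)\<^sup>2" for h
  proof -
    have "?F (z + h) - ?F z - ?g \<bullet> h = (\<integral>\<xi>. f \<xi> (z + h) - f \<xi> z - g \<xi> z \<bullet> h \<partial>P)"
      using f_integrable integrable_gradient by simp
    also have "\<bar>\<dots>\<bar> \<le> (\<integral>\<xi>. \<bar>f \<xi> (z + h) - f \<xi> z - g \<xi> z \<bullet> h\<bar> \<partial>P)"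
      by (rule integral_abs_bound)
    also have "\<dots> \<le> K * (norm h)\<^sup>2"
      using f_integrable integrable_inner_gradient
      by (intro integral_le_const AE_I2 lipschitz_gradient_remainder_le f_gradient g_lipschitz)
        auto
    finally show ?thesis .
  qed
  have quotient_bound: "norm (norm (?F (z + h) - ?F z - ?g \<bullet> h) / norm h) \<le> K * norm h" for h
  proof (cases "h = 0")
    case False
    have "norm (?F (z + h) - ?F z - ?g \<bullet> h) / norm h \<le> K * (norm h)\<^sup>2 / norm h"
      using remainder[of h] by (intro divide_right_mono) simp_all
    also have "\<dots> = K * norm h"
      using False by (simp add: power2_eq_square)
    finally show ?thesis
      by simp
  qed simp
  have "((\<lambda>h. K * norm h) \<longlongrightarrow> 0) (at 0)"
    by (intro tendsto_mult_right_zero tendsto_norm_zero tendsto_ident_at)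
  then show "((\<lambda>h. norm (?F (z + h) - ?F z - ?g \<bullet> h) / norm h) \<longlongrightarrow> 0) (at 0)"
    by (rule Lim_null_comparison[OF always_eventually[OF allI[OF quotient_bound]]])
qed

lemma smooth_with_integral: "smooth_with K (\<lambda>z. \<integral>\<xi>. f \<xi> z \<partial>P)"
  unfolding smooth_with_def
proof (intro conjI allI lipschitz_onI)
  interpret prob_space P by (rule prob)
  show "\<exists>g. has_gradient (\<lambda>z. \<integral>\<xi>. f \<xi> z \<partial>P) g z" for z
    using has_gradient_integral by blast
  obtain \<xi>0 where "\<xi>0 \<in> space P"
    using not_empty by blast
  then show "0 \<le> K"
    using g_lipschitz lipschitz_on_nonneg by blast
  fix z1 z2 :: 'v
  have "norm ((\<integral>\<xi>. g \<xi> z1 \<partial>P) - (\<integral>\<xi>. g \<xi> z2 \<partial>P)) = norm (\<integral>\<xi>. g \<xi> z1 - g \<xi> z2 \<partial>P)"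
    using integrable_gradient by simp
  also have "\<dots> \<le> (\<integral>\<xi>. norm (g \<xi> z1 - g \<xi> z2) \<partial>P)"
    by (rule integral_norm_bound)
  also have "\<dots> \<le> K * norm (z1 - z2)"
    using integrable_gradient
    by (intro integral_le_const AE_I2 lipschitz_on_normD[OF g_lipschitz]) auto
  finally show "dist (gradient (\<lambda>z. \<integral>\<xi>. f \<xi> z \<partial>P) z1) (gradient (\<lambda>z. \<integral>\<xi>. f \<xi> z \<partial>P) z2)
      \<le> K * dist z1 z2"
    by (simp add: gradient_eqI[OF has_gradient_integral] dist_norm)
qed

end

lemma bounded_DERIV_imp_lipschitz:
  fixes f :: "real \<Rightarrow> real"
  assumes "\<And>t. DERIV f t :> f' t" and "\<And>t. \<bar>f' t\<bar> \<le> B"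
  shows "B-lipschitz_on UNIV f"
proof (rule lipschitz_onI)
  show "dist (f s) (f t) \<le> B * dist s t" for s t
    using field_differentiable_bound[of UNIV f f' B s t] assms
    by (simp add: dist_real_def has_field_derivative_at_within)
  show "0 \<le> B"
    using assms(2) abs_ge_zero order_trans by blast
qed

definition psi_star_deriv :: "real \<Rightarrow> real \<Rightarrow> real" where
  "psi_star_deriv \<alpha> t = exp t / (1 - \<alpha> + \<alpha> * exp t)"

context
  fixes \<alpha> :: real
  assumes \<alpha>_pos: "0 < \<alpha>" and \<alpha>_less_1: "\<alpha> < 1"
begin

lemma psi_star_denominator_pos: "0 < 1 - \<alpha> + \<alpha> * exp t"
  using \<alpha>_pos \<alpha>_less_1 by (simp add: add_pos_nonneg)

lemma DERIV_psi_star: "DERIV (psi_star \<alpha>) t :> psi_star_deriv \<alpha> t"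
proof -
  have "DERIV (\<lambda>t. ln (1 - \<alpha> + \<alpha> * exp t) / \<alpha>) t :> \<alpha> * exp t / (1 - \<alpha> + \<alpha> * exp t) / \<alpha>"
    using psi_star_denominator_pos by (auto intro!: derivative_eq_intros)
  then show ?thesis
    using \<alpha>_pos unfolding psi_star_def[abs_def] psi_star_deriv_def by simp
qed

lemma psi_star_deriv_pos: "0 < psi_star_deriv \<alpha> t"
  using psi_star_denominator_pos unfolding psi_star_deriv_def by simp

lemma psi_star_deriv_less: "psi_star_deriv \<alpha> t < 1 / \<alpha>"
  using psi_star_denominator_pos \<alpha>_pos \<alpha>_less_1
  unfolding psi_star_deriv_def by (simp add: field_simps)

lemma abs_psi_star_le: "\<bar>psi_star \<alpha> t\<bar> \<le> \<bar>t\<bar> / \<alpha>"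
proof -
  have "(1 / \<alpha>)-lipschitz_on UNIV (psi_star \<alpha>)"
    using DERIV_psi_star psi_star_deriv_pos psi_star_deriv_less
    by (intro bounded_DERIV_imp_lipschitz) (auto simp: less_imp_le)
  from lipschitz_onD[OF this, of t 0] show ?thesis
    by (simp add: psi_star_def dist_real_def)
qed

lemma DERIV_psi_star_deriv:
  "DERIV (psi_star_deriv \<alpha>) t :> (1 - \<alpha>) * exp t / (1 - \<alpha> + \<alpha> * exp t)\<^sup>2"
proof -
  have "DERIV (psi_star_deriv \<alpha>) t :>
      (exp t * (1 - \<alpha> + \<alpha> * exp t) - exp t * (\<alpha> * exp t)) / (1 - \<alpha> + \<alpha> * exp t)\<^sup>2"
    unfolding psi_star_deriv_def[abs_def] using psi_star_denominator_pos[of t]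
    by (auto intro!: derivative_eq_intros simp: power2_eq_square)
  then show ?thesis
    by (simp add: algebra_simps)
qed

lemma lipschitz_psi_star_deriv: "(1 / (4 * \<alpha>))-lipschitz_on UNIV (psi_star_deriv \<alpha>)"
proof (rule bounded_DERIV_imp_lipschitz[OF DERIV_psi_star_deriv])
  fix t :: real
  define y where "y = exp t"
  define D where "D = 1 - \<alpha> + \<alpha> * y"
  have "0 < y" "0 < D"
    using psi_star_denominator_pos[of t] unfolding y_def D_def by simp_all
  \<comment> \<open>AM-GM: \<open>D\<^sup>2 - 4 \<alpha> (1 - \<alpha>) y = (1 - \<alpha> - \<alpha> y)\<^sup>2\<close>\<close>
  have "4 * \<alpha> * ((1 - \<alpha>) * y) \<le> D\<^sup>2"
    using zero_le_power2[of "1 - \<alpha> - \<alpha> * y"] unfolding D_def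
    by (simp add: power2_eq_square algebra_simps)
  then have "(1 - \<alpha>) * y / D\<^sup>2 \<le> 1 / (4 * \<alpha>)"
    using \<open>0 < D\<close> \<alpha>_pos by (simp add: field_simps)
  moreover have "0 \<le> (1 - \<alpha>) * y / D\<^sup>2"
    using \<open>0 < y\<close> \<alpha>_less_1 by simp
  ultimately show "\<bar>(1 - \<alpha>) * exp t / (1 - \<alpha> + \<alpha> * exp t)\<^sup>2\<bar> \<le> 1 / (4 * \<alpha>)"
    unfolding y_def D_def by simp
qed

end

lemma norm_fst_add_abs_snd_le:
  fixes z :: "'a::real_normed_vector \<times> real"
  shows "norm (fst z) + \<bar>snd z\<bar> \<le> sqrt 2 * norm z"
proof -
  have "(norm (fst z) + \<bar>snd z\<bar>)\<^sup>2 \<le> 2 * ((norm (fst z))\<^sup>2 + (snd z)\<^sup>2)"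
    using zero_le_power2[of "norm (fst z) - \<bar>snd z\<bar>"]
    by (simp add: power2_eq_square algebra_simps)
  then have "norm (fst z) + \<bar>snd z\<bar> \<le> sqrt (2 * ((norm (fst z))\<^sup>2 + (snd z)\<^sup>2))"
    by (rule real_le_rsqrt)
  also have "\<dots> = sqrt 2 * norm z"
    unfolding norm_prod_def real_sqrt_mult by simp
  finally show ?thesis .
qed

lemma norm_Pair_scaleR_le:
  fixes d :: "'a::real_normed_vector" and a b :: real
  assumes "norm d \<le> G" and "\<bar>b\<bar> \<le> G * \<bar>a\<bar>"
  shows "norm (a *\<^sub>R d, b) \<le> sqrt 2 * G * \<bar>a\<bar>"
proof (rule power2_le_imp_le)
  have "0 \<le> G"
    using assms(1) norm_ge_zero order_trans by blast
  have "\<bar>a\<bar> * norm d \<le> G * \<bar>a\<bar>"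
    using assms(1) by (metis abs_ge_zero mult.commute mult_right_mono)
  have "(norm (a *\<^sub>R d, b))\<^sup>2 = (\<bar>a\<bar> * norm d)\<^sup>2 + \<bar>b\<bar>\<^sup>2"
    by (simp add: norm_Pair)
  also have "\<dots> \<le> (G * \<bar>a\<bar>)\<^sup>2 + (G * \<bar>a\<bar>)\<^sup>2"
    using \<open>\<bar>a\<bar> * norm d \<le> G * \<bar>a\<bar>\<close> assms(2) by (intro add_mono power_mono) auto
  also have "\<dots> = (sqrt 2 * G * \<bar>a\<bar>)\<^sup>2"
    by (simp add: power_mult_distrib)
  finally show "(norm (a *\<^sub>R d, b))\<^sup>2 \<le> (sqrt 2 * G * \<bar>a\<bar>)\<^sup>2" .
  show "0 \<le> sqrt 2 * G * \<bar>a\<bar>"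
    using \<open>0 \<le> G\<close> by simp
qed

definition Lhat_pt_arg :: "real \<Rightarrow> real \<Rightarrow> ('a \<Rightarrow> 'b \<Rightarrow> real) \<Rightarrow> 'a \<times> real \<Rightarrow> 'b \<Rightarrow> real" where
  "Lhat_pt_arg lam G ell z \<xi> = (ell (fst z) \<xi> - G * snd z) / lam"

definition Lhat_pt_grad ::
    "real \<Rightarrow> real \<Rightarrow> real \<Rightarrow> ('a::real_inner \<Rightarrow> 'b \<Rightarrow> real) \<Rightarrow> 'a \<times> real \<Rightarrow> 'b \<Rightarrow> 'a \<times> real" where
  "Lhat_pt_grad \<alpha> lam G ell z \<xi> =
    (psi_star_deriv \<alpha> (Lhat_pt_arg lam G ell z \<xi>) *\<^sub>R gradient (\<lambda>x. ell x \<xi>) (fst z),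
     G * (1 - psi_star_deriv \<alpha> (Lhat_pt_arg lam G ell z \<xi>)))"

lemma Lhat_pt_eq: "Lhat_pt \<alpha> lam G ell z \<xi> = lam * psi_star \<alpha> (Lhat_pt_arg lam G ell z \<xi>) + G * snd z"
  unfolding Lhat_pt_def Lhat_pt_arg_def ..

context
  fixes \<alpha> lam G :: real
  assumes \<alpha>_pos: "0 < \<alpha>" and \<alpha>_less_1: "\<alpha> < 1" and lam_pos: "0 < lam"
begin

lemma integrable_Lhat_pt:
  assumes "prob_space P" and "integrable P (ell (fst z))"
  shows "integrable P (Lhat_pt \<alpha> lam G ell z)"
proof (rule Bochner_Integration.integrable_bound)
  interpret prob_space P by fact
  show "integrable P (\<lambda>\<xi>. \<bar>ell (fst z) \<xi> - G * snd z\<bar> / \<alpha> + \<bar>G * snd z\<bar>)"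
    using assms(2) by auto
  have [measurable]: "ell (fst z) \<in> borel_measurable P"
    using assms(2) by (rule borel_measurable_integrable)
  show "Lhat_pt \<alpha> lam G ell z \<in> borel_measurable P"
    unfolding Lhat_pt_def[abs_def] psi_star_def by measurable
  show "AE \<xi> in P. norm (Lhat_pt \<alpha> lam G ell z \<xi>)
      \<le> norm (\<bar>ell (fst z) \<xi> - G * snd z\<bar> / \<alpha> + \<bar>G * snd z\<bar>)"
  proof (rule AE_I2)
    fix \<xi>
    let ?u = "Lhat_pt_arg lam G ell z \<xi>"
    have "lam * \<bar>psi_star \<alpha> ?u\<bar> \<le> lam * (\<bar>?u\<bar> / \<alpha>)"
      using lam_pos by (intro mult_left_mono abs_psi_star_le[OF \<alpha>_pos \<alpha>_less_1]) simp
    also have "\<dots> = \<bar>ell (fst z) \<xi> - G * snd z\<bar> / \<alpha>"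
      unfolding Lhat_pt_arg_def using lam_pos by simp
    finally show "norm (Lhat_pt \<alpha> lam G ell z \<xi>) \<le> norm (\<bar>ell (fst z) \<xi> - G * snd z\<bar> / \<alpha> + \<bar>G * snd z\<bar>)"
      unfolding Lhat_pt_eq using lam_pos by (simp add: abs_mult abs_triangle_ineq[THEN order_trans])
  qed
qed

lemma has_gradient_Lhat_pt:
  assumes "has_gradient (\<lambda>x. ell x \<xi>) d (fst z)"
  shows "has_gradient (\<lambda>w. Lhat_pt \<alpha> lam G ell w \<xi>) (Lhat_pt_grad \<alpha> lam G ell z \<xi>) z"
proof -
  let ?u = "\<lambda>w. Lhat_pt_arg lam G ell w \<xi>" and ?s = "psi_star_deriv \<alpha> (Lhat_pt_arg lam G ell z \<xi>)"
  have "((\<lambda>w. ell (fst w) \<xi>) has_derivative (\<lambda>h. d \<bullet> fst h)) (at z)"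
    using has_derivative_compose[OF has_derivative_fst[OF has_derivative_ident]
        assms[unfolded has_gradient_def]] by simp
  then have "(?u has_derivative (\<lambda>h. (d \<bullet> fst h - G * snd h) / lam)) (at z)"
    unfolding Lhat_pt_arg_def using lam_pos by (auto intro!: derivative_eq_intros)
  from has_derivative_compose[OF this
      DERIV_psi_star[OF \<alpha>_pos \<alpha>_less_1, THEN has_field_derivative_imp_has_derivative]]
  have "((\<lambda>w. lam * psi_star \<alpha> (?u w) + G * snd w) has_derivative
      (\<lambda>h. lam * (?s * ((d \<bullet> fst h - G * snd h) / lam)) + G * snd h)) (at z)"
    by (auto intro!: derivative_eq_intros)
  moreover have "(\<lambda>h. lam * (?s * ((d \<bullet> fst h - G * snd h) / lam)) + G * snd h)
      = (\<lambda>h. Lhat_pt_grad \<alpha> lam G ell z \<xi> \<bullet> h)"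
    using lam_pos gradient_eqI[OF assms]
    by (auto simp: fun_eq_iff Lhat_pt_grad_def inner_prod_def field_simps)
  ultimately show ?thesis
    unfolding has_gradient_def Lhat_pt_eq by simp
qed

lemma norm_Lhat_pt_grad_le:
  assumes "G-lipschitz_on UNIV (\<lambda>x. ell x \<xi>)" and "has_gradient (\<lambda>x. ell x \<xi>) d (fst z)"
  shows "(norm (Lhat_pt_grad \<alpha> lam G ell z \<xi>))\<^sup>2 \<le> 2 * G\<^sup>2 / \<alpha>\<^sup>2"
proof -
  define s where "s = psi_star_deriv \<alpha> (Lhat_pt_arg lam G ell z \<xi>)"
  have "0 < s" "s < 1 / \<alpha>" "1 < 1 / \<alpha>"
    unfolding s_def using psi_star_deriv_pos psi_star_deriv_less \<alpha>_pos \<alpha>_less_1 by auto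
  then have s_bound: "\<bar>s\<bar> \<le> 1 / \<alpha>" and one_minus_s_bound: "\<bar>1 - s\<bar> \<le> 1 / \<alpha>"
    by auto
  have "norm (gradient (\<lambda>x. ell x \<xi>) (fst z)) \<le> G"
    using norm_gradient_le_lipschitz[OF assms(2,1)] gradient_eqI[OF assms(2)] by simp
  then have "\<bar>s\<bar> * norm (gradient (\<lambda>x. ell x \<xi>) (fst z)) \<le> 1 / \<alpha> * G"
    using s_bound \<alpha>_pos by (intro mult_mono) auto
  then have "(norm (s *\<^sub>R gradient (\<lambda>x. ell x \<xi>) (fst z)))\<^sup>2 \<le> (G / \<alpha>)\<^sup>2"
    by (intro power_mono) auto
  moreover have "\<bar>G * (1 - s)\<bar> \<le> \<bar>G / \<alpha>\<bar>"
    using one_minus_s_bound lipschitz_on_nonneg[OF assms(1)] \<alpha>_pos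
    by (simp add: abs_mult mult_left_mono divide_inverse)
  then have "(G * (1 - s))\<^sup>2 \<le> (G / \<alpha>)\<^sup>2"
    by (simp only: abs_le_square_iff)
  ultimately show ?thesis
    by (simp add: Lhat_pt_grad_def s_def[symmetric] norm_Pair power_divide)
qed

lemma nn_integral_norm_gradient_Lhat_pt_le:
  assumes "prob_space P"
    and lipschitz: "\<And>\<xi>. \<xi> \<in> space P \<Longrightarrow> G-lipschitz_on UNIV (\<lambda>x. ell x \<xi>)"
    and differentiable: "\<And>\<xi>. \<xi> \<in> space P \<Longrightarrow> \<exists>d. has_gradient (\<lambda>x. ell x \<xi>) d (fst z)"
  shows "(\<integral>\<^sup>+ \<xi>. ennreal ((norm (gradient (\<lambda>w. Lhat_pt \<alpha> lam G ell w \<xi>) z))\<^sup>2) \<partial>P)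
    \<le> ennreal (2 * G\<^sup>2 / \<alpha>\<^sup>2)"
proof -
  interpret prob_space P by fact
  have "(\<integral>\<^sup>+ \<xi>. ennreal ((norm (gradient (\<lambda>w. Lhat_pt \<alpha> lam G ell w \<xi>) z))\<^sup>2) \<partial>P)
      \<le> (\<integral>\<^sup>+ \<xi>. ennreal (2 * G\<^sup>2 / \<alpha>\<^sup>2) \<partial>P)"
  proof (intro nn_integral_mono ennreal_leI)
    fix \<xi> assume \<xi>: "\<xi> \<in> space P"
    then obtain d where d: "has_gradient (\<lambda>x. ell x \<xi>) d (fst z)"
      using differentiable by blast
    then have "has_gradient (\<lambda>w. Lhat_pt \<alpha> lam G ell w \<xi>) (Lhat_pt_grad \<alpha> lam G ell z \<xi>) z"
      by (rule has_gradient_Lhat_pt)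
    with lipschitz[OF \<xi>] d
    show "(norm (gradient (\<lambda>w. Lhat_pt \<alpha> lam G ell w \<xi>) z))\<^sup>2 \<le> 2 * G\<^sup>2 / \<alpha>\<^sup>2"
      by (simp add: gradient_eqI norm_Lhat_pt_grad_le)
  qed
  then show ?thesis
    by (simp add: emeasure_space_1)
qed

lemma lipschitz_Lhat_pt_arg:
  fixes ell :: "'a::real_normed_vector \<Rightarrow> 'b \<Rightarrow> real"
  assumes "G-lipschitz_on UNIV (\<lambda>x. ell x \<xi>)"
  shows "(sqrt 2 * G / lam)-lipschitz_on UNIV (\<lambda>z. Lhat_pt_arg lam G ell z \<xi>)"
proof (rule lipschitz_onI)
  have "0 \<le> G"
    using assms by (rule lipschitz_on_nonneg)
  then show "0 \<le> sqrt 2 * G / lam"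
    using lam_pos by simp
  fix z1 z2 :: "'a \<times> real"
  have "dist (Lhat_pt_arg lam G ell z1 \<xi>) (Lhat_pt_arg lam G ell z2 \<xi>)
      = \<bar>(ell (fst z1) \<xi> - ell (fst z2) \<xi>) - G * (snd z1 - snd z2)\<bar> / lam"
    unfolding Lhat_pt_arg_def dist_real_def using lam_pos
    by (simp add: diff_divide_distrib[symmetric] algebra_simps)
  also have "\<dots> \<le> (\<bar>ell (fst z1) \<xi> - ell (fst z2) \<xi>\<bar> + G * \<bar>snd z1 - snd z2\<bar>) / lam"
    using abs_triangle_ineq4[of "ell (fst z1) \<xi> - ell (fst z2) \<xi>" "G * (snd z1 - snd z2)"]
      \<open>0 \<le> G\<close> lam_pos
    by (intro divide_right_mono) (simp_all add: abs_mult)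
  also have "\<dots> \<le> (G * norm (fst z1 - fst z2) + G * \<bar>snd z1 - snd z2\<bar>) / lam"
    using lipschitz_on_normD[OF assms] lam_pos by (intro divide_right_mono add_right_mono) auto
  also have "\<dots> \<le> G * (sqrt 2 * dist z1 z2) / lam"
    using norm_fst_add_abs_snd_le[of "z1 - z2"] \<open>0 \<le> G\<close> lam_pos unfolding dist_norm
    by (intro divide_right_mono) (auto simp: distrib_left[symmetric] intro: mult_left_mono)
  finally show "dist (Lhat_pt_arg lam G ell z1 \<xi>) (Lhat_pt_arg lam G ell z2 \<xi>)
      \<le> sqrt 2 * G / lam * dist z1 z2"
    by (simp add: mult_ac)
qed

lemma lipschitz_psi_star_deriv_Lhat_pt_arg:
  fixes ell :: "'a::real_normed_vector \<Rightarrow> 'b \<Rightarrow> real"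
  assumes "G-lipschitz_on UNIV (\<lambda>x. ell x \<xi>)"
  shows "(sqrt 2 * G / (4 * \<alpha> * lam))-lipschitz_on UNIV
    (\<lambda>z. psi_star_deriv \<alpha> (Lhat_pt_arg lam G ell z \<xi>))"
  using lipschitz_on_compose[OF lipschitz_Lhat_pt_arg[where ell=ell and \<xi>=\<xi>, OF assms]
      lipschitz_on_subset[OF lipschitz_psi_star_deriv[OF \<alpha>_pos \<alpha>_less_1]]]
  by (simp add: comp_def mult_ac)

lemma lipschitz_Lhat_pt_grad:
  assumes lip: "G-lipschitz_on UNIV (\<lambda>x. ell x \<xi>)" and smooth: "smooth_with L (\<lambda>x. ell x \<xi>)"
  shows "(L / \<alpha> + G\<^sup>2 / (2 * lam * \<alpha>))-lipschitz_on UNIV (\<lambda>z. Lhat_pt_grad \<alpha> lam G ell z \<xi>)"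
proof (rule lipschitz_onI)
  have "0 \<le> G" "0 \<le> L"
    using lip smooth by (auto simp: smooth_with_def lipschitz_on_nonneg)
  then show "0 \<le> L / \<alpha> + G\<^sup>2 / (2 * lam * \<alpha>)"
    using \<alpha>_pos lam_pos by simp
  fix z1 z2 :: "'a \<times> real"
  define s where "s z = psi_star_deriv \<alpha> (Lhat_pt_arg lam G ell z \<xi>)" for z
  define d where "d z = gradient (\<lambda>x. ell x \<xi>) (fst z)" for z :: "'a \<times> real"
  define N where "N = norm (z1 - z2)"
  have "0 < s z1" "s z1 < 1 / \<alpha>"
    unfolding s_def using psi_star_deriv_pos psi_star_deriv_less \<alpha>_pos \<alpha>_less_1 by auto
  have "norm (d z1 - d z2) \<le> L * norm (fst z1 - fst z2)"
    using smooth unfolding smooth_with_def d_def by (blast intro: lipschitz_on_normD)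
  also have "\<dots> \<le> L * N"
    unfolding N_def using \<open>0 \<le> L\<close>
    by (intro mult_left_mono) (metis fst_diff norm_fst_le prod.collapse)
  finally have "s z1 * norm (d z1 - d z2) \<le> 1 / \<alpha> * (L * N)"
    using \<open>0 < s z1\<close> \<open>s z1 < 1 / \<alpha>\<close> \<open>0 \<le> L\<close> \<alpha>_pos unfolding N_def
    by (intro mult_mono) auto
  then have first: "norm (s z1 *\<^sub>R (d z1 - d z2), 0::real) \<le> L / \<alpha> * N"
    using \<open>0 < s z1\<close> by (simp add: norm_Pair)
  have s_diff: "\<bar>s z1 - s z2\<bar> \<le> sqrt 2 * G / (4 * \<alpha> * lam) * N"
    using lipschitz_on_normD[OF lipschitz_psi_star_deriv_Lhat_pt_arg[where ell=ell and \<xi>=\<xi>, OF lip]]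
    unfolding s_def N_def by simp
  have "norm (d z2) \<le> G"
    unfolding d_def using lip smooth gradient_eqI norm_gradient_le_lipschitz
    unfolding smooth_with_def by metis
  then have "norm ((s z1 - s z2) *\<^sub>R d z2, - G * (s z1 - s z2)) \<le> sqrt 2 * G * \<bar>s z1 - s z2\<bar>"
    by (rule norm_Pair_scaleR_le) (simp add: abs_mult \<open>0 \<le> G\<close>)
  also have "\<dots> \<le> sqrt 2 * G * (sqrt 2 * G / (4 * \<alpha> * lam) * N)"
    using s_diff \<open>0 \<le> G\<close> by (intro mult_left_mono) auto
  also have "\<dots> = (sqrt 2 * sqrt 2) * G\<^sup>2 * N / (4 * lam * \<alpha>)"
    by (simp add: power2_eq_square mult_ac)
  also have "\<dots> = G\<^sup>2 / (2 * lam * \<alpha>) * N"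
    by (simp add: mult_ac)
  finally have second: "norm ((s z1 - s z2) *\<^sub>R d z2, - G * (s z1 - s z2)) \<le> G\<^sup>2 / (2 * lam * \<alpha>) * N" .
  have "Lhat_pt_grad \<alpha> lam G ell z \<xi> = (s z *\<^sub>R d z, G * (1 - s z))" for z
    unfolding Lhat_pt_grad_def s_def d_def ..
  then have "dist (Lhat_pt_grad \<alpha> lam G ell z1 \<xi>) (Lhat_pt_grad \<alpha> lam G ell z2 \<xi>)
      = norm ((s z1 *\<^sub>R (d z1 - d z2), 0) + ((s z1 - s z2) *\<^sub>R d z2, - G * (s z1 - s z2)))"
    by (simp add: dist_norm algebra_simps)
  also have "\<dots> \<le> L / \<alpha> * N + G\<^sup>2 / (2 * lam * \<alpha>) * N"
    using norm_triangle_ineq first second by (rule order_trans[OF _ add_mono])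
  finally show "dist (Lhat_pt_grad \<alpha> lam G ell z1 \<xi>) (Lhat_pt_grad \<alpha> lam G ell z2 \<xi>)
      \<le> (L / \<alpha> + G\<^sup>2 / (2 * lam * \<alpha>)) * dist z1 z2"
    by (simp add: N_def dist_norm distrib_right)
qed

end

theorem lemma3p11:
  fixes P :: "'b measure" and ell :: "'a::euclidean_space \<Rightarrow> 'b \<Rightarrow> real"
    and \<alpha> lam G L :: real
  assumes "0 < \<alpha>" "\<alpha> < 1" "0 < lam"
    and "prob_space P"
    and "\<And>x. ell x \<in> borel_measurable P"
    and "\<And>x. integrable P (ell x)"
    and "\<And>\<xi>. \<xi> \<in> space P \<Longrightarrow> G-lipschitz_on UNIV (\<lambda>x. ell x \<xi>)"
    and "\<And>\<xi>. \<xi> \<in> space P \<Longrightarrow> smooth_with L (\<lambda>x. ell x \<xi>)"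
  shows "(\<forall>z :: 'a \<times> real.
           (\<integral>\<^sup>+ \<xi>. ennreal ((norm (gradient (\<lambda>w. Lhat_pt \<alpha> lam G ell w \<xi>) z))\<^sup>2) \<partial>P)
             \<le> ennreal (2 * G\<^sup>2 / \<alpha>\<^sup>2))
         \<and> smooth_with (L / \<alpha> + G\<^sup>2 / (2 * lam * \<alpha>)) (Lhat P \<alpha> lam G ell)"
proof (intro conjI allI)
  have differentiable: "\<exists>d. has_gradient (\<lambda>x. ell x \<xi>) d x" if "\<xi> \<in> space P" for \<xi> x
    using assms(8)[OF that] unfolding smooth_with_def by blast
  show "(\<integral>\<^sup>+ \<xi>. ennreal ((norm (gradient (\<lambda>w. Lhat_pt \<alpha> lam G ell w \<xi>) z))\<^sup>2) \<partial>P)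
      \<le> ennreal (2 * G\<^sup>2 / \<alpha>\<^sup>2)" for z :: "'a \<times> real"
    using assms(1-4,7) differentiable by (rule nn_integral_norm_gradient_Lhat_pt_le)
  show "smooth_with (L / \<alpha> + G\<^sup>2 / (2 * lam * \<alpha>)) (Lhat P \<alpha> lam G ell)"
    unfolding Lhat_def[abs_def]
  proof (rule smooth_with_integral[of P "\<lambda>\<xi> w. Lhat_pt \<alpha> lam G ell w \<xi>"
        "\<lambda>\<xi> w. Lhat_pt_grad \<alpha> lam G ell w \<xi>"])
    show "integrable P (\<lambda>\<xi>. Lhat_pt \<alpha> lam G ell z \<xi>)" for z
      by (rule integrable_Lhat_pt[OF assms(1-4)]) (rule assms(6))
    fix \<xi> assume \<xi>: "\<xi> \<in> space P"
    show "has_gradient (\<lambda>w. Lhat_pt \<alpha> lam G ell w \<xi>) (Lhat_pt_grad \<alpha> lam G ell z \<xi>) z" for z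
    proof -
      obtain d where "has_gradient (\<lambda>x. ell x \<xi>) d (fst z)"
        using differentiable[OF \<xi>] by blast
      then show ?thesis
        by (rule has_gradient_Lhat_pt[OF assms(1-3)])
    qed
    show "(L / \<alpha> + G\<^sup>2 / (2 * lam * \<alpha>))-lipschitz_on UNIV (\<lambda>w. Lhat_pt_grad \<alpha> lam G ell w \<xi>)"
      using assms(7,8)[OF \<xi>] by (rule lipschitz_Lhat_pt_grad[OF assms(1-3)])
  qed (rule assms(4))
qed

end
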